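(* Let $f(1),\dots,f(T)\in\mathbb R$ and $0=\nu_0<\nu_1<\dots<\nu_M=T$ be such that $f(\nu_m+1)=\dots=f(\nu_{m+1})$ for all $m=0,\dots,M-1$. Let $\Delta$ be a positive integer and suppose that for some $1\le m\le M-1$, $|\nu_m-\nu_{m'}|\ge\Delta$ for all $m'\ne m$. Then, writing $\nu=\nu_m$, \[ \max\Bigl\{\Bigl|\sum_{r=1}^{\nu-\Delta}f(r)\Bigr|,\ \Bigl|\sum_{r=1}^{\nu}f(r)\Bigr|,\ \Bigl|\sum_{r=1}^{\nu+\Delta}f(r)\Bigr|\Bigr\}\ \ge\ \Delta\,|f(\nu)-f(\nu+1)|/4. \]
   Context: An empty sum equals $0$. *)

theory Defs
  imports Complex_Main
begin

end

theory Submission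
  imports Defs
begin

text \<open>On the two blocks of length \<open>\<Delta>\<close> on either side of \<open>\<nu>\<close> the function \<open>f\<close> is constant,
  equal to \<open>a = f \<nu>\<close> and \<open>b = f (\<nu> + 1)\<close> respectively, so the three partial sums \<open>S\<^sub>-, S, S\<^sub>+\<close>
  satisfy \<open>S - S\<^sub>- = \<Delta> a\<close> and \<open>S\<^sub>+ - S = \<Delta> b\<close>. Hence \<open>\<Delta> (a - b) = 2 S - S\<^sub>- - S\<^sub>+\<close>, whose
  absolute value is at most four times the largest of \<open>|S\<^sub>-|, |S|, |S\<^sub>+|\<close>.\<close>

lemma sum_atLeast1_extend_const:
  fixes f :: "nat \<Rightarrow> 'a::comm_semiring_1"
  assumes "\<And>r. a < r \<Longrightarrow> r \<le> a + d \<Longrightarrow> f r = c"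
  shows "(\<Sum>r=1..a + d. f r) = (\<Sum>r=1..a. f r) + of_nat d * c"
proof -
  have "(\<Sum>r=1..a + d. f r) = (\<Sum>r=1..a. f r) + (\<Sum>r=a+1..a+d. f r)"
    by (rule sum.ub_add_nat) simp
  also have "(\<Sum>r=a+1..a+d. f r) = (\<Sum>r=a+1..a+d. c)"
    using assms by (intro sum.cong) auto
  finally show ?thesis by simp
qed

lemma abs_second_difference_le_max:
  fixes x y z :: real
  shows "\<bar>2 * y - x - z\<bar> \<le> 4 * max (max \<bar>x\<bar> \<bar>y\<bar>) \<bar>z\<bar>"
  by linarith

lemma isolated_breakpoint_gaps:
  fixes \<nu> :: "nat \<Rightarrow> nat"
  assumes mono: "\<And>i. i < M \<Longrightarrow> \<nu> i < \<nu> (Suc i)"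
    and m: "1 \<le> m" "m < M"
    and sep: "\<And>m'. m' \<le> M \<Longrightarrow> m' \<noteq> m \<Longrightarrow> \<bar>int (\<nu> m) - int (\<nu> m')\<bar> \<ge> int \<Delta>"
  shows "\<nu> (m - 1) + \<Delta> \<le> \<nu> m" and "\<nu> m + \<Delta> \<le> \<nu> (Suc m)"
proof -
  have "\<nu> (m - 1) < \<nu> m" "\<bar>int (\<nu> m) - int (\<nu> (m - 1))\<bar> \<ge> int \<Delta>"
    using mono[of "m - 1"] sep[of "m - 1"] m by auto
  then show "\<nu> (m - 1) + \<Delta> \<le> \<nu> m" by linarith
  have "\<nu> m < \<nu> (Suc m)" "\<bar>int (\<nu> m) - int (\<nu> (Suc m))\<bar> \<ge> int \<Delta>"
    using mono[of m] sep[of "Suc m"] m by auto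
  then show "\<nu> m + \<Delta> \<le> \<nu> (Suc m)" by linarith
qed

theorem lemma21:
  fixes f :: "nat \<Rightarrow> real" and T M \<Delta> m :: nat and \<nu> :: "nat \<Rightarrow> nat"
  assumes nu0: "\<nu> 0 = 0" and nuM: "\<nu> M = T"
    and mono: "\<And>i. i < M \<Longrightarrow> \<nu> i < \<nu> (Suc i)"
    and const: "\<And>i r. i < M \<Longrightarrow> \<nu> i + 1 \<le> r \<Longrightarrow> r \<le> \<nu> (Suc i) \<Longrightarrow> f r = f (\<nu> (Suc i))"
    and Dpos: "\<Delta> > 0"
    and m: "1 \<le> m" "m \<le> M - 1"
    and sep: "\<And>m'. m' \<le> M \<Longrightarrow> m' \<noteq> m \<Longrightarrow> \<bar>int (\<nu> m) - int (\<nu> m')\<bar> \<ge> int \<Delta>"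
  shows "max (max \<bar>\<Sum>r=1..\<nu> m - \<Delta>. f r\<bar> \<bar>\<Sum>r=1..\<nu> m. f r\<bar>) \<bar>\<Sum>r=1..\<nu> m + \<Delta>. f r\<bar>
           \<ge> real \<Delta> * \<bar>f (\<nu> m) - f (\<nu> m + 1)\<bar> / 4"
proof -
  have mM: "m - 1 < M" "m < M" and m_Suc: "Suc (m - 1) = m" using m by auto
  note gaps = isolated_breakpoint_gaps[OF mono m(1) mM(2) sep]
  have left_block: "f r = f (\<nu> m)" if "\<nu> m - \<Delta> < r" "r \<le> \<nu> m - \<Delta> + \<Delta>" for r
    using const[OF mM(1), of r] that gaps(1) m_Suc by simp
  have left: "(\<Sum>r=1..\<nu> m. f r) = (\<Sum>r=1..\<nu> m - \<Delta>. f r) + real \<Delta> * f (\<nu> m)"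
    using sum_atLeast1_extend_const[of "\<nu> m - \<Delta>" \<Delta> f "f (\<nu> m)", OF left_block] gaps(1) by simp
  have "f r = f (\<nu> m + 1)" if "\<nu> m < r" "r \<le> \<nu> m + \<Delta>" for r
    using const[OF mM(2), of r] const[OF mM(2), of "\<nu> m + 1"] that gaps(2) by simp
  then have right: "(\<Sum>r=1..\<nu> m + \<Delta>. f r) = (\<Sum>r=1..\<nu> m. f r) + real \<Delta> * f (\<nu> m + 1)"
    by (rule sum_atLeast1_extend_const)
  have "2 * (\<Sum>r=1..\<nu> m. f r) - (\<Sum>r=1..\<nu> m - \<Delta>. f r) - (\<Sum>r=1..\<nu> m + \<Delta>. f r)
      = real \<Delta> * (f (\<nu> m) - f (\<nu> m + 1))"
    unfolding right left by (simp add: algebra_simps)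
  then have "real \<Delta> * \<bar>f (\<nu> m) - f (\<nu> m + 1)\<bar>
      = \<bar>2 * (\<Sum>r=1..\<nu> m. f r) - (\<Sum>r=1..\<nu> m - \<Delta>. f r) - (\<Sum>r=1..\<nu> m + \<Delta>. f r)\<bar>"
    by (simp add: abs_mult)
  also have "\<dots> \<le> 4 * max (max \<bar>\<Sum>r=1..\<nu> m - \<Delta>. f r\<bar> \<bar>\<Sum>r=1..\<nu> m. f r\<bar>) \<bar>\<Sum>r=1..\<nu> m + \<Delta>. f r\<bar>"
    by (rule abs_second_difference_le_max)
  finally show ?thesis by linarith
qed

end
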